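(* Let $F=f+p$ where $f:\mathbb{R}^n\to\mathbb{R}$ is convex and continuously differentiable with Lipschitz continuous gradient and $p:\mathbb{R}^n\to\mathbb{R}$ is convex. Let $\sigma>0$ and for each $k\ge0$ let $H_k=\sigma\mathbf I-u_ku_k^t$ with $\|u_k\|^2<\sigma$. Let $\{y^k\}$ be an arbitrary sequence in $\mathbb{R}^n$, let $\{\alpha^k\}$ satisfy $\alpha^k\in(0,1)$ and $\sum_{k=0}^\infty\alpha^k=\infty$, and let $\lambda^0=1$. For each $k$ let $$M_{H_k}(x,y^k)=f(y^k)+\langle\nabla f(y^k),x-y^k\rangle+\tfrac12(x-y^k)^tH_k(x-y^k)+p(x),$$ $x^\ast_{H_k}(y^k)=\arg\min_xM_{H_k}(x,y^k)$, $g^k=H_k(y^k-x^\ast_{H_k}(y^k))$, and assume $F(x^\ast_{H_k}(y^k))\le M_{H_k}(x^\ast_{H_k}(y^k),y^k)$ for all $k$. Let $\phi^0:\mathbb{R}^n\to\mathbb{R}$ be any function and define $$\lambda^{k+1}=(1-\alpha^k)\lambda^k,\qquad \phi^{k+1}(x)=(1-\alpha^k)\phi^k(x)+\alpha^k\Big[F(x^\ast_{H_k}(y^k))+\langle g^k,x-y^k\rangle+\tfrac{1}{2\sigma}\|g^k\|^2\Big].$$ Then $(\{\phi^k\},\{\lambda^k\})$ is an estimate sequence of $F$.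
   Context: A pair of sequences $\{\phi^k(x)\}$ and $\{\lambda^k\}$ with $\lambda^k\ge0$ is called an estimate sequence of a function $F$ if $\lambda^k\to0$ and for every $x\in\mathbb{R}^n$ and all $k\ge0$, $\phi^k(x)\le(1-\lambda^k)F(x)+\lambda^k\phi^0(x)$. *)

theory Defs
  imports "HOL-Analysis.Analysis"
begin

definition estimate_sequence ::
  "('a \<Rightarrow> real) \<Rightarrow> (nat \<Rightarrow> 'a \<Rightarrow> real) \<Rightarrow> (nat \<Rightarrow> real) \<Rightarrow> bool" where
  "estimate_sequence F phi lam \<longleftrightarrow>
     (\<forall>k. lam k \<ge> 0) \<and> lam \<longlonglongrightarrow> 0 \<and>
     (\<forall>x k. phi k x \<le> (1 - lam k) * F x + lam k * phi 0 x)"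

definition Hmat :: "real \<Rightarrow> real ^ 'n \<Rightarrow> real ^ 'n ^ 'n" where
  "Hmat \<sigma> u = \<sigma> *\<^sub>R mat 1 - (\<chi> i j. u $ i * u $ j)"

definition Mmodel ::
  "(real ^ 'n \<Rightarrow> real) \<Rightarrow> (real ^ 'n \<Rightarrow> real ^ 'n) \<Rightarrow> (real ^ 'n \<Rightarrow> real)
    \<Rightarrow> real ^ 'n ^ 'n \<Rightarrow> real ^ 'n \<Rightarrow> real ^ 'n \<Rightarrow> real" where
  "Mmodel f gradf p H x y =
     f y + gradf y \<bullet> (x - y) + (1/2) * ((x - y) \<bullet> (H *v (x - y))) + p x"

end

theory Submission
  imports Defs
begin

text \<open>Each bracket in the recursion for \<open>\<phi>\<close> is a minorant of \<open>F\<close>. With \<open>e = x\<^sup>* - y\<close>,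
  the tangent inequality for \<open>f\<close> at \<open>y\<close>, the optimality condition for \<open>p\<close> at the model
  minimizer \<open>x\<^sup>*\<close> and \<open>F(x\<^sup>*) \<le> M(x\<^sup>*, y)\<close> give
  \<open>F(x) \<ge> F(x\<^sup>*) + \<langle>g, x - y\<rangle> + \<frac>1 2 \<langle>e, H e\<rangle>\<close>, and \<open>0 \<le> H \<le> \<sigma> I\<close> yields
  \<open>\<parallel>g\<parallel>\<^sup>2 = \<parallel>H e\<parallel>\<^sup>2 \<le> \<sigma> \<langle>e, H e\<rangle>\<close>. A convex combination of \<open>\<phi>\<^sub>k\<close> with minorants of \<open>F\<close>
  satisfies the estimate-sequence inequality by induction, and
  \<open>\<lambda>\<^sub>k = \<Prod>(1 - \<alpha>\<^sub>i) \<le> exp (- \<Sum>\<alpha>\<^sub>i) \<longrightarrow> 0\<close>.\<close>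

lemma nonneg_of_nonneg_add_small_mult:
  fixes A B :: real
  assumes "\<And>t. 0 < t \<Longrightarrow> t \<le> 1 \<Longrightarrow> 0 \<le> A + t * B"
  shows "0 \<le> A"
proof -
  have "((\<lambda>t. A + t * B) \<longlongrightarrow> A) (at_right 0)"
    by (auto intro!: tendsto_eq_intros)
  moreover have "\<forall>\<^sub>F t in at_right 0. 0 \<le> A + t * B"
    by (rule eventually_mono[OF eventually_at_right_real[of 0 1]]) (auto intro: assms)
  ultimately show ?thesis
    by (rule tendsto_lowerbound) simp
qed

lemma prod_one_minus_tendsto_0:
  fixes \<alpha> :: "nat \<Rightarrow> real"
  assumes \<alpha>: "\<And>k. 0 \<le> \<alpha> k \<and> \<alpha> k \<le> 1"
    and diverges: "filterlim (\<lambda>n. \<Sum>k<n. \<alpha> k) at_top sequentially"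
  shows "(\<lambda>n. \<Prod>k<n. 1 - \<alpha> k) \<longlonglongrightarrow> 0"
proof (rule tendsto_sandwich)
  show "\<forall>\<^sub>F n in sequentially. 0 \<le> (\<Prod>k<n. 1 - \<alpha> k)"
    using \<alpha> by (intro always_eventually allI prod_nonneg) auto
  have "(\<Prod>k<n. 1 - \<alpha> k) \<le> (\<Prod>k<n. exp (- \<alpha> k))" for n
    using \<alpha> by (intro prod_mono) (auto simp: exp_ge_add_one_self[of "- \<alpha> _", simplified])
  then show "\<forall>\<^sub>F n in sequentially. (\<Prod>k<n. 1 - \<alpha> k) \<le> exp (- (\<Sum>k<n. \<alpha> k))"
    by (simp add: exp_sum sum_negf[symmetric])
  have "filterlim (\<lambda>n. - (\<Sum>k<n. \<alpha> k)) at_bot sequentially"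
    using filterlim_uminus_at_top[THEN iffD1, OF diverges] .
  then show "(\<lambda>n. exp (- (\<Sum>k<n. \<alpha> k))) \<longlonglongrightarrow> 0"
    by (rule filterlim_compose[OF exp_at_bot])
qed simp

lemma convex_on_ge_linearization:
  fixes f :: "'a::real_normed_vector \<Rightarrow> real"
  assumes convex: "convex_on UNIV f" and deriv: "(f has_derivative D) (at y)"
  shows "f y + D (x - y) \<le> f x"
proof -
  define g where "g t = f (y + t *\<^sub>R (x - y))" for t :: real
  have "convex_on UNIV g"
  proof
    fix a s t :: real
    assume "0 < a" "a < 1"
    have "y + ((1 - a) *\<^sub>R s + a *\<^sub>R t) *\<^sub>R (x - y)
        = (1 - a) *\<^sub>R (y + s *\<^sub>R (x - y)) + a *\<^sub>R (y + t *\<^sub>R (x - y))"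
      by (simp add: algebra_simps)
    then show "g ((1 - a) *\<^sub>R s + a *\<^sub>R t) \<le> (1 - a) * g s + a * g t"
      using convex_onD[OF convex, of a] \<open>0 < a\<close> \<open>a < 1\<close> by (simp add: g_def)
  qed simp
  have "((\<lambda>t. y + t *\<^sub>R (x - y)) has_derivative (\<lambda>t. t *\<^sub>R (x - y))) (at 0)"
    by (auto intro!: derivative_eq_intros)
  from diff_chain_at[OF this, of f D] deriv
  have "(g has_derivative (\<lambda>t. D (t *\<^sub>R (x - y)))) (at 0)"
    by (simp add: g_def[abs_def] o_def)
  then have "(g has_field_derivative D (x - y)) (at 0)"
    by (rule has_derivative_imp_has_field_derivative)
       (simp add: linear_scale[OF has_derivative_linear[OF deriv]])
  then have "D (x - y) * (1 - 0) \<le> g 1 - g 0"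
    by (intro convex_on_imp_above_tangent[OF \<open>convex_on UNIV g\<close>]) auto
  then show ?thesis
    by (simp add: g_def)
qed

lemma quadratic_form_add_scaled:
  fixes A :: "'a::real_inner \<Rightarrow> 'a"
  assumes "linear A" and self_adjoint: "\<And>a b. a \<bullet> A b = A a \<bullet> b"
  shows "(e + t *\<^sub>R w) \<bullet> A (e + t *\<^sub>R w) = e \<bullet> A e + 2 * t * (A e \<bullet> w) + t\<^sup>2 * (w \<bullet> A w)"
proof -
  have "e \<bullet> A w = A e \<bullet> w" by (rule self_adjoint)
  then show ?thesis
    by (simp add: linear_add[OF \<open>linear A\<close>] linear_scale[OF \<open>linear A\<close>] inner_add_left
        inner_add_right inner_commute power2_eq_square algebra_simps)
qed

text \<open>Compare the minimum with the values at \<open>xs + t (x - xs)\<close>: the quadratic term is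
  \<open>O(t\<^sup>2)\<close> and disappears as \<open>t \<rightarrow> 0\<close>.\<close>
lemma argmin_quadratic_plus_convex_subgradient:
  fixes p :: "'a::real_inner \<Rightarrow> real" and A :: "'a \<Rightarrow> 'a"
  assumes p_convex: "convex_on UNIV p"
    and "linear A" and self_adjoint: "\<And>a b. a \<bullet> A b = A a \<bullet> b"
    and argmin: "\<And>z. c \<bullet> (xs - y) + (1/2) * ((xs - y) \<bullet> A (xs - y)) + p xs
                     \<le> c \<bullet> (z - y) + (1/2) * ((z - y) \<bullet> A (z - y)) + p z"
  shows "p xs - (c + A (xs - y)) \<bullet> (x - xs) \<le> p x"
proof -
  define e where "e = xs - y"
  define w where "w = x - xs"
  have "0 \<le> (c \<bullet> w + A e \<bullet> w + p x - p xs) + t * ((1/2) * (w \<bullet> A w))"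
    if t: "0 < t" "t \<le> 1" for t
  proof -
    have convexity: "p (xs + t *\<^sub>R w) \<le> p xs + t * (p x - p xs)"
      using convex_onD[OF p_convex, of t xs x] t by (simp add: w_def algebra_simps)
    have shift: "xs + t *\<^sub>R w - y = e + t *\<^sub>R w"
      by (simp add: e_def)
    have expansion: "c \<bullet> (xs + t *\<^sub>R w - y) + (1/2) * ((xs + t *\<^sub>R w - y) \<bullet> A (xs + t *\<^sub>R w - y))
        = c \<bullet> e + (1/2) * (e \<bullet> A e) + t * (c \<bullet> w + A e \<bullet> w) + t\<^sup>2 * ((1/2) * (w \<bullet> A w))"
      unfolding shift quadratic_form_add_scaled[OF \<open>linear A\<close> self_adjoint]
      by (simp add: inner_add_right algebra_simps)
    have "0 \<le> t * (c \<bullet> w + A e \<bullet> w) + t * (p x - p xs) + t\<^sup>2 * ((1/2) * (w \<bullet> A w))"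
      using argmin[of "xs + t *\<^sub>R w"] convexity expansion unfolding e_def by linarith
    then have "0 \<le> t * ((c \<bullet> w + A e \<bullet> w + p x - p xs) + t * ((1/2) * (w \<bullet> A w)))"
      by (simp add: power2_eq_square algebra_simps)
    then show ?thesis
      using t by (simp add: zero_le_mult_iff)
  qed
  then have "0 \<le> c \<bullet> w + A e \<bullet> w + p x - p xs"
    by (rule nonneg_of_nonneg_add_small_mult)
  then show ?thesis
    by (simp add: e_def w_def inner_add_left)
qed

lemma Hmat_mult_vec: "Hmat \<sigma> u *v v = \<sigma> *\<^sub>R v - (u \<bullet> v) *\<^sub>R u"
proof -
  have "(\<chi> i j. u $ i * u $ j) *v v = (u \<bullet> v) *\<^sub>R u"
    by (simp add: vec_eq_iff matrix_vector_mult_def inner_vec_def sum_distrib_left mult_ac)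
  then show ?thesis
    by (simp add: Hmat_def matrix_vector_mult_diff_rdistrib scaleR_matrix_vector_assoc[symmetric])
qed

lemma inner_Hmat_mult_vec_commute: "a \<bullet> (Hmat \<sigma> u *v b) = (Hmat \<sigma> u *v a) \<bullet> b"
  by (simp add: Hmat_mult_vec inner_diff_left inner_diff_right inner_commute)

text \<open>Equivalently \<open>H\<^sup>2 \<le> \<sigma> H\<close>, i.e. the spectrum of \<open>H\<close> lies in \<open>[0, \<sigma>]\<close>.\<close>
lemma norm_Hmat_mult_vec_le:
  assumes "(norm u)\<^sup>2 \<le> \<sigma>"
  shows "(norm (Hmat \<sigma> u *v v))\<^sup>2 \<le> \<sigma> * (v \<bullet> (Hmat \<sigma> u *v v))"
proof -
  have "(norm (Hmat \<sigma> u *v v))\<^sup>2 = \<sigma> * (v \<bullet> (Hmat \<sigma> u *v v)) + (u \<bullet> v)\<^sup>2 * ((norm u)\<^sup>2 - \<sigma>)"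
    unfolding power2_norm_eq_inner
    by (simp add: Hmat_mult_vec inner_diff_left inner_diff_right
        inner_commute power2_eq_square algebra_simps)
  moreover have "(u \<bullet> v)\<^sup>2 * ((norm u)\<^sup>2 - \<sigma>) \<le> 0"
    using assms by (simp add: mult_nonneg_nonpos)
  ultimately show ?thesis
    by linarith
qed

lemma Mmodel_argmin_lower_bound:
  fixes f p :: "real ^ 'n \<Rightarrow> real" and gradf :: "real ^ 'n \<Rightarrow> real ^ 'n"
  assumes f_convex: "convex_on UNIV f"
    and f_grad: "\<And>x. (f has_derivative (\<lambda>h. gradf x \<bullet> h)) (at x)"
    and p_convex: "convex_on UNIV p"
    and sigma_pos: "\<sigma> > 0"
    and u_small: "(norm u)\<^sup>2 \<le> \<sigma>"
    and argmin: "\<And>x. Mmodel f gradf p (Hmat \<sigma> u) xs y \<le> Mmodel f gradf p (Hmat \<sigma> u) x y"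
    and F_le_M: "f xs + p xs \<le> Mmodel f gradf p (Hmat \<sigma> u) xs y"
  shows "f xs + p xs + (Hmat \<sigma> u *v (y - xs)) \<bullet> (x - y)
         + (1 / (2 * \<sigma>)) * (norm (Hmat \<sigma> u *v (y - xs)))\<^sup>2 \<le> f x + p x"
proof -
  define H where "H = Hmat \<sigma> u"
  define e where "e = xs - y"
  have g: "H *v (y - xs) = - (H *v e)"
    using linear_neg[OF matrix_vector_mul_linear, of H e] by (simp add: e_def)
  have "p xs - (gradf y + H *v e) \<bullet> (x - xs) \<le> p x"
    unfolding e_def
  proof (rule argmin_quadratic_plus_convex_subgradient[OF p_convex])
    show "a \<bullet> (H *v b) = (H *v a) \<bullet> b" for a b
      unfolding H_def by (rule inner_Hmat_mult_vec_commute)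
    show "gradf y \<bullet> (xs - y) + 1/2 * ((xs - y) \<bullet> (H *v (xs - y))) + p xs
        \<le> gradf y \<bullet> (z - y) + 1/2 * ((z - y) \<bullet> (H *v (z - y))) + p z" for z
      using argmin[of z] by (simp add: Mmodel_def H_def)
  qed simp
  moreover have "f y + gradf y \<bullet> (x - y) \<le> f x"
    by (rule convex_on_ge_linearization[OF f_convex f_grad])
  moreover have "f xs + p xs \<le> f y + gradf y \<bullet> e + (1/2) * (e \<bullet> (H *v e)) + p xs"
    using F_le_M by (simp add: Mmodel_def H_def e_def)
  moreover have "(1 / (2 * \<sigma>)) * (norm (H *v (y - xs)))\<^sup>2 \<le> (1/2) * (e \<bullet> (H *v e))"
  proof -
    have "(norm (H *v (y - xs)))\<^sup>2 \<le> \<sigma> * (e \<bullet> (H *v e))"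
      unfolding g using norm_Hmat_mult_vec_le[OF u_small, of e] by (simp add: H_def)
    then show ?thesis
      using sigma_pos by (simp add: field_simps)
  qed
  moreover have "(H *v (y - xs)) \<bullet> (x - y) = - ((H *v e) \<bullet> (x - xs)) - e \<bullet> (H *v e)"
  proof -
    have "x - y = (x - xs) + e"
      by (simp add: e_def)
    then show ?thesis
      unfolding g inner_minus_left by (simp only: inner_add_right inner_commute[of e])
  qed
  moreover have "gradf y \<bullet> (x - y) = gradf y \<bullet> (x - xs) + gradf y \<bullet> e"
    by (simp add: e_def inner_diff_right)
  ultimately show ?thesis
    unfolding H_def[symmetric] by (simp add: inner_add_left)
qed

lemma estimate_sequence_of_lower_models:
  fixes F :: "'a \<Rightarrow> real" and \<psi> phi :: "nat \<Rightarrow> 'a \<Rightarrow> real"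
  assumes alpha_range: "\<And>k. 0 \<le> \<alpha> k \<and> \<alpha> k \<le> 1"
    and alpha_div: "filterlim (\<lambda>n. \<Sum>k<n. \<alpha> k) at_top sequentially"
    and lam0: "lam 0 = 1"
    and lam_rec: "\<And>k. lam (Suc k) = (1 - \<alpha> k) * lam k"
    and phi_rec: "\<And>k x. phi (Suc k) x = (1 - \<alpha> k) * phi k x + \<alpha> k * \<psi> k x"
    and lower: "\<And>k x. \<psi> k x \<le> F x"
  shows "estimate_sequence F phi lam"
proof -
  have lam_prod: "lam k = (\<Prod>i<k. 1 - \<alpha> i)" for k
    by (induction k) (simp_all add: lam0 lam_rec)
  have "phi k x \<le> (1 - lam k) * F x + lam k * phi 0 x" for k x
  proof (induction k)
    case (Suc k)
    have "phi (Suc k) x \<le> (1 - \<alpha> k) * ((1 - lam k) * F x + lam k * phi 0 x) + \<alpha> k * F x"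
      unfolding phi_rec using Suc alpha_range[of k] lower[of k x]
      by (intro add_mono mult_left_mono) auto
    also have "\<dots> = (1 - lam (Suc k)) * F x + lam (Suc k) * phi 0 x"
      by (simp add: lam_rec algebra_simps)
    finally show ?case .
  qed (simp add: lam0)
  moreover have "lam k \<ge> 0" for k
    unfolding lam_prod using alpha_range by (intro prod_nonneg) auto
  moreover have "lam \<longlonglongrightarrow> 0"
    unfolding lam_prod[abs_def] by (rule prod_one_minus_tendsto_0[OF alpha_range alpha_div])
  ultimately show ?thesis
    unfolding estimate_sequence_def by blast
qed

theorem lemma7:
  fixes f p :: "real ^ 'n \<Rightarrow> real"
    and gradf :: "real ^ 'n \<Rightarrow> real ^ 'n"
    and \<sigma> :: real
    and u y xs :: "nat \<Rightarrow> real ^ 'n"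
    and \<alpha> lam :: "nat \<Rightarrow> real"
    and phi :: "nat \<Rightarrow> real ^ 'n \<Rightarrow> real"
  assumes f_convex: "convex_on UNIV f"
    and f_grad: "\<And>x. (f has_derivative (\<lambda>h. gradf x \<bullet> h)) (at x)"
    and grad_cont: "continuous_on UNIV gradf"
    and grad_lip: "\<exists>L. \<forall>x x'. norm (gradf x - gradf x') \<le> L * norm (x - x')"
    and p_convex: "convex_on UNIV p"
    and sigma_pos: "\<sigma> > 0"
    and u_small: "\<And>k. (norm (u k))\<^sup>2 < \<sigma>"
    and alpha_range: "\<And>k. 0 < \<alpha> k \<and> \<alpha> k < 1"
    and alpha_div: "filterlim (\<lambda>n. \<Sum>k<n. \<alpha> k) at_top sequentially"
    and xs_argmin: "\<And>k x. Mmodel f gradf p (Hmat \<sigma> (u k)) (xs k) (y k)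
                            \<le> Mmodel f gradf p (Hmat \<sigma> (u k)) x (y k)"
    and F_le_M: "\<And>k. f (xs k) + p (xs k) \<le> Mmodel f gradf p (Hmat \<sigma> (u k)) (xs k) (y k)"
    and lam0: "lam 0 = 1"
    and lam_rec: "\<And>k. lam (Suc k) = (1 - \<alpha> k) * lam k"
    and phi_rec: "\<And>k x. phi (Suc k) x = (1 - \<alpha> k) * phi k x + \<alpha> k *
        (f (xs k) + p (xs k)
         + (Hmat \<sigma> (u k) *v (y k - xs k)) \<bullet> (x - y k)
         + (1 / (2 * \<sigma>)) * (norm (Hmat \<sigma> (u k) *v (y k - xs k)))\<^sup>2)"
  shows "estimate_sequence (\<lambda>x. f x + p x) phi lam"
proof (rule estimate_sequence_of_lower_models[OF _ alpha_div lam0 lam_rec phi_rec])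
  show "0 \<le> \<alpha> k \<and> \<alpha> k \<le> 1" for k
    using alpha_range[of k] by simp
  show "f (xs k) + p (xs k) + (Hmat \<sigma> (u k) *v (y k - xs k)) \<bullet> (x - y k)
      + (1 / (2 * \<sigma>)) * (norm (Hmat \<sigma> (u k) *v (y k - xs k)))\<^sup>2 \<le> f x + p x" for k x
    using u_small[of k]
    by (intro Mmodel_argmin_lower_bound[OF f_convex f_grad p_convex sigma_pos _ xs_argmin F_le_M])
      simp
qed

end
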